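(* Let $m,n\geq2$ and let $\mathbf p\in\mathbb R^m$, $\mathbf q\in\mathbb R^n$ be probability vectors with all entries strictly positive. If $P\in\mathcal C(\mathbf p,\mathbf q)$ is local optimal and $V(P)$ is a tree, then $|V(P)|=m+n-1$.
   Context: $\mathcal C(\mathbf p,\mathbf q)$: nonnegative $m\times n$ matrices $P=(p_{i,j})$ with row sums $p_i$, column sums $q_j$. $V(P)=\{(i,j):p_{i,j}\neq0\}$. Graph notions on $[m]\times[n]$: distinct points adjacent iff they share a row or column; a circuit is a cyclic sequence $v_0,\dots,v_{s-1}$ ($s\ge4$) of pairwise distinct points $v_k=(i_k,j_k)$ with (indices mod $s$) $v_k,v_{k+1}$ adjacent and $(i_{k+2}-i_k)(j_{k+2}-j_k)\neq0$ for all $k$; a tree is a connected subset with no circuit. $H(A)=-\sum a_{i,j}\log a_{i,j}$ ($0\log0=0$). Moves on $P$ (each yields $P'\in\mathcal C(\mathbf p,\mathbf q)$ by replacing the chosen submatrix $A$ by $A'$): (M1) distinct rows $i_1,i_2$, distinct columns $j_1,j_2$, $a_{s,t}=p_{i_s,j_t}$; if $\max(a_{1,1},a_{2,2})\ge\max(a_{1,2},a_{2,1})$, put $b=\min(a_{1,2},a_{2,1})$, $a'_{s,s}=a_{s,s}+b$, $a'_{1,2}=a_{1,2}-b$, $a'_{2,1}=a_{2,1}-b$. (M2) same replacement, allowed when $a_{1,1}+a_{1,2}\ge a_{2,1}+a_{2,2}$, $a_{1,1}+a_{2,1}\ge a_{1,2}+a_{2,2}$, $a_{1,2}\ge a_{2,1}$.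 (M3) distinct rows $i_1,i_2$, distinct columns $j_1,\dots,j_r$ ($r\ge2$), $a_{s,k}=p_{i_s,j_k}$, allowed when $a_{2,k}=0$ ($k\ge2$) and $\sum_{k\ge2}a_{1,k}\le a_{2,1}\le\sum_{k\ge1}a_{1,k}$; replace by $a'_{1,1}=\sum_ka_{1,k}$, $a'_{1,k}=0$, $a'_{2,1}=a_{2,1}-\sum_{k\ge2}a_{1,k}$, $a'_{2,k}=a_{1,k}$ ($k\ge2$); moves may also be applied with rows and columns exchanged. $P$ is local optimal if no such move produces $P'$ with $H(P')<H(P)$. *)

theory Defs
  imports Complex_Main
begin

text \<open>Matrices are functions nat => nat => real; only the entries with row index
  i < m and column index j < n (0-based) matter.\<close>

type_synonym mat = "nat \<Rightarrow> nat \<Rightarrow> real"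

definition coupling :: "nat \<Rightarrow> nat \<Rightarrow> (nat \<Rightarrow> real) \<Rightarrow> (nat \<Rightarrow> real) \<Rightarrow> mat \<Rightarrow> bool" where
  "coupling m n p q P \<longleftrightarrow>
     (\<forall>i<m. \<forall>j<n. 0 \<le> P i j) \<and>
     (\<forall>i<m. (\<Sum>j<n. P i j) = p i) \<and>
     (\<forall>j<n. (\<Sum>i<m. P i j) = q j)"

definition supp :: "nat \<Rightarrow> nat \<Rightarrow> mat \<Rightarrow> (nat \<times> nat) set" where
  "supp m n P = {(i, j). i < m \<and> j < n \<and> P i j \<noteq> 0}"

definition adjacent :: "nat \<times> nat \<Rightarrow> nat \<times> nat \<Rightarrow> bool" where
  "adjacent u v \<longleftrightarrow> u \<noteq> v \<and> (fst u = fst v \<or> snd u = snd v)"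

definition is_circuit :: "(nat \<times> nat) list \<Rightarrow> bool" where
  "is_circuit vs \<longleftrightarrow> (let s = length vs in
     4 \<le> s \<and> distinct vs \<and>
     (\<forall>k<s. adjacent (vs ! k) (vs ! ((k + 1) mod s)) \<and>
            fst (vs ! ((k + 2) mod s)) \<noteq> fst (vs ! k) \<and>
            snd (vs ! ((k + 2) mod s)) \<noteq> snd (vs ! k)))"

definition connected_pts :: "(nat \<times> nat) set \<Rightarrow> bool" where
  "connected_pts S \<longleftrightarrow>
     (\<forall>u\<in>S. \<forall>v\<in>S. (u, v) \<in> {(x, y). x \<in> S \<and> y \<in> S \<and> adjacent x y}\<^sup>*)"

definition is_tree :: "(nat \<times> nat) set \<Rightarrow> bool" where
  "is_tree S \<longleftrightarrow> connected_pts S \<and> \<not> (\<exists>vs. set vs \<subseteq> S \<and> is_circuit vs)"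

definition entropy :: "nat \<Rightarrow> nat \<Rightarrow> mat \<Rightarrow> real" where
  "entropy m n P = - (\<Sum>(i, j)\<in>{..<m} \<times> {..<n}. P i j * ln (P i j))"

definition shift2 :: "mat \<Rightarrow> nat \<Rightarrow> nat \<Rightarrow> nat \<Rightarrow> nat \<Rightarrow> real \<Rightarrow> mat" where
  "shift2 P i1 i2 j1 j2 b = (\<lambda>i j.
     if (i, j) = (i1, j1) \<or> (i, j) = (i2, j2) then P i j + b
     else if (i, j) = (i1, j2) \<or> (i, j) = (i2, j1) then P i j - b
     else P i j)"

definition M1_ok :: "mat \<Rightarrow> nat \<Rightarrow> nat \<Rightarrow> nat \<Rightarrow> nat \<Rightarrow> bool" where
  "M1_ok P i1 i2 j1 j2 \<longleftrightarrow> max (P i1 j1) (P i2 j2) \<ge> max (P i1 j2) (P i2 j1)"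

definition M2_ok :: "mat \<Rightarrow> nat \<Rightarrow> nat \<Rightarrow> nat \<Rightarrow> nat \<Rightarrow> bool" where
  "M2_ok P i1 i2 j1 j2 \<longleftrightarrow>
     P i1 j1 + P i1 j2 \<ge> P i2 j1 + P i2 j2 \<and>
     P i1 j1 + P i2 j1 \<ge> P i1 j2 + P i2 j2 \<and>
     P i1 j2 \<ge> P i2 j1"

text \<open>Move M3: columns j1 (first) and the set J of the other columns j2..jr (r >= 2).\<close>
definition M3_ok :: "mat \<Rightarrow> nat \<Rightarrow> nat \<Rightarrow> nat \<Rightarrow> nat set \<Rightarrow> bool" where
  "M3_ok P i1 i2 j1 J \<longleftrightarrow>
     (\<forall>k\<in>J. P i2 k = 0) \<and>
     (\<Sum>k\<in>J. P i1 k) \<le> P i2 j1 \<and> P i2 j1 \<le> P i1 j1 + (\<Sum>k\<in>J. P i1 k)"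

definition M3_res :: "mat \<Rightarrow> nat \<Rightarrow> nat \<Rightarrow> nat \<Rightarrow> nat set \<Rightarrow> mat" where
  "M3_res P i1 i2 j1 J = (\<lambda>i j.
     if i = i1 \<and> j = j1 then P i1 j1 + (\<Sum>k\<in>J. P i1 k)
     else if i = i1 \<and> j \<in> J then 0
     else if i = i2 \<and> j = j1 then P i2 j1 - (\<Sum>k\<in>J. P i1 k)
     else if i = i2 \<and> j \<in> J then P i1 j
     else P i j)"

definition move0 :: "nat \<Rightarrow> nat \<Rightarrow> mat \<Rightarrow> mat \<Rightarrow> bool" where
  "move0 m n P P' \<longleftrightarrow>
     (\<exists>i1 i2 j1 j2. i1 < m \<and> i2 < m \<and> i1 \<noteq> i2 \<and> j1 < n \<and> j2 < n \<and> j1 \<noteq> j2 \<and>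
        (M1_ok P i1 i2 j1 j2 \<or> M2_ok P i1 i2 j1 j2) \<and>
        P' = shift2 P i1 i2 j1 j2 (min (P i1 j2) (P i2 j1))) \<or>
     (\<exists>i1 i2 j1 J. i1 < m \<and> i2 < m \<and> i1 \<noteq> i2 \<and> j1 < n \<and>
        J \<subseteq> {..<n} \<and> J \<noteq> {} \<and> j1 \<notin> J \<and>
        M3_ok P i1 i2 j1 J \<and> P' = M3_res P i1 i2 j1 J)"

definition transp :: "mat \<Rightarrow> mat" where
  "transp P = (\<lambda>i j. P j i)"

definition move :: "nat \<Rightarrow> nat \<Rightarrow> mat \<Rightarrow> mat \<Rightarrow> bool" where
  "move m n P P' \<longleftrightarrow> move0 m n P P' \<or> move0 n m (transp P) (transp P')"

definition local_optimal :: "nat \<Rightarrow> nat \<Rightarrow> mat \<Rightarrow> bool" where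
  "local_optimal m n P \<longleftrightarrow> (\<forall>P'. move m n P P' \<longrightarrow> entropy m n P \<le> entropy m n P')"

end

(* View a set S of points as the edge set of the bipartite graph between its rows and
   its columns; the theorem is then the edge count of a spanning tree.

   If S is connected, it can be built up one point at a time, each new point sharing a row
   or a column with an earlier one, so each step adds at most one new row or column; hence
   rows + columns <= |S| + 1.

   If every point of S shares its row and its column with other points of S, a walk in S
   alternating between column and row moves never gets stuck; the stretch between the first
   repetition of a row (or column) index is a circuit.  So a circuit-free S has a point alone
   in its row or its column, and removing it loses a row or a column; by induction
   |S| + 1 <= rows + columns.

   Positive marginals make all m rows and n columns occur in the support. *)

theory Submission
  imports Defs
begin

lemma mod_add_2_neq: "2 < (L::nat) \<Longrightarrow> (t + 2) mod L \<noteq> t mod L"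
  by (metis le_add1 add_diff_cancel_left' mod_eq_dvd_iff_nat dvd_imp_le not_less zero_less_numeral)

lemma even_mod_even_iff: "even (L::nat) \<Longrightarrow> even (t mod L) = even t"
  by (metis dvd_mod_iff)

text \<open>Reading the values of \<open>u\<close> alternately as row and column indices, \<open>stair u c\<close>
  enumerates the points of a staircase path; \<open>c\<close> decides whether it starts with a row.\<close>
definition stair :: "(nat \<Rightarrow> nat) \<Rightarrow> nat \<Rightarrow> nat \<Rightarrow> nat \<times> nat" where
  "stair u c t = (if even (t + c) then (u t, u (Suc t)) else (u (Suc t), u t))"

lemma stair_is_circuit:
  fixes u :: "nat \<Rightarrow> nat" and L c :: nat
  assumes "4 \<le> L" and "even L"
    and periodic: "\<And>t. u (t mod L) = u t"
    and inj: "\<And>t t'. even t = even t' \<Longrightarrow> t mod L \<noteq> t' mod L \<Longrightarrow> u t \<noteq> u t'"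
  shows "is_circuit (map (stair u c) [0..<L])"
proof -
  have stair_periodic: "stair u c (t mod L) = stair u c t" for t
    using periodic[of t] periodic[of "Suc t"] periodic[of "Suc (t mod L)"]
      even_mod_even_iff[OF \<open>even L\<close>, of t]
    by (simp add: stair_def mod_Suc_eq)
  have skip: "u (t + 2) \<noteq> u t" for t
    using inj[of "t + 2" t] mod_add_2_neq[of L t] \<open>4 \<le> L\<close> by auto
  have "stair u c x \<noteq> stair u c y" if "x < y" "y < L" for x y
  proof
    assume eq: "stair u c x = stair u c y"
    show False
    proof (cases "even x = even y")
      case True
      then have "u x = u y"
        using eq by (auto simp: stair_def split: if_splits)
      then show False
        using inj[OF True] that by simp
    next
      case False
      then have "u x = u (Suc y)" "u (Suc x) = u y"
        using eq by (auto simp: stair_def split: if_splits)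
      with False that have "Suc x = y" "x mod L = Suc y mod L"
        using inj[of "Suc x" y] inj[of x "Suc y"] by auto
      then show False
        using mod_add_2_neq[of L x] that \<open>4 \<le> L\<close> by simp
    qed
  qed
  then have "distinct (map (stair u c) [0..<L])"
    by (auto simp: distinct_map inj_on_def) (metis linorder_neqE_nat)
  moreover have "adjacent (stair u c k) (stair u c (k + 1))" for k
    using skip[of k] by (auto simp: adjacent_def stair_def)
  moreover have "fst (stair u c (k + 2)) \<noteq> fst (stair u c k) \<and>
      snd (stair u c (k + 2)) \<noteq> snd (stair u c k)" for k
    using skip[of k] skip[of "Suc k"] by (auto simp: stair_def dest: sym)
  ultimately show ?thesis
    using \<open>4 \<le> L\<close> stair_periodic[of "k + 1" for k] stair_periodic[of "k + 2" for k]
    by (simp add: is_circuit_def Let_def)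
qed

lemma circuit_from_first_repeat:
  fixes w :: "nat \<Rightarrow> nat"
  assumes in_T: "\<And>k. stair w 0 k \<in> T"
    and skip: "\<And>k. w (k + 2) \<noteq> w k"
    and "a < b" and "even a = even b" and "w a = w b"
    and first_repeat: "\<And>x y. x < y \<Longrightarrow> y < b \<Longrightarrow> even x = even y \<Longrightarrow> w x \<noteq> w y"
  shows "\<exists>vs. set vs \<subseteq> T \<and> is_circuit vs"
proof -
  define L where "L = b - a"
  have "even L"
    using \<open>a < b\<close> \<open>even a = even b\<close> by (simp add: L_def)
  moreover have "L \<noteq> 2"
    using skip[of a] \<open>w a = w b\<close> \<open>a < b\<close> unfolding L_def
    by (metis le_add_diff_inverse less_imp_le_nat add.commute)
  moreover have "L \<noteq> 0"
    using \<open>a < b\<close> by (simp add: L_def)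
  ultimately have "4 \<le> L"
    by (auto elim!: evenE)
  \<comment> \<open>\<open>u\<close> runs periodically through the closed stretch \<open>w a, \<dots>, w b = w a\<close>\<close>
  define u where "u t = w (a + t mod L)" for t
  have periodic: "u (t mod L) = u t" for t
    by (simp add: u_def)
  have inj: "u t \<noteq> u t'" if "even t = even t'" "t mod L \<noteq> t' mod L" for t t'
  proof -
    define x y where "x = a + t mod L" and "y = a + t' mod L"
    have "x < b" "y < b"
      using mod_less_divisor[of L t] mod_less_divisor[of L t'] \<open>4 \<le> L\<close> \<open>a < b\<close>
      unfolding x_def y_def L_def by linarith+
    moreover have "even x = even y"
      using that(1) even_mod_even_iff[OF \<open>even L\<close>] by (simp add: x_def y_def)
    moreover have "x \<noteq> y"
      using that(2) by (simp add: x_def y_def)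
    ultimately show ?thesis
      using first_repeat unfolding u_def x_def[symmetric] y_def[symmetric]
      by (metis linorder_neqE_nat)
  qed
  have u_Suc: "u (Suc t) = w (Suc (a + t mod L))" for t
  proof (cases "Suc (t mod L) < L")
    case True
    then have "Suc t mod L = Suc (t mod L)"
      by (metis mod_Suc_eq mod_less)
    then show ?thesis
      by (simp add: u_def)
  next
    case False
    then have "Suc (t mod L) = L"
      using mod_less_divisor[of L t] \<open>4 \<le> L\<close> by linarith
    then have "Suc t mod L = 0" and "Suc (a + t mod L) = b"
      using \<open>a < b\<close> by (metis mod_Suc_eq mod_self, simp add: L_def)
    then show ?thesis
      using \<open>w a = w b\<close> by (simp add: u_def)
  qed
  have "stair u a t = stair w 0 (a + t mod L)" for t
    using u_Suc[of t] even_mod_even_iff[OF \<open>even L\<close>, of t]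
    by (simp add: stair_def u_def add.commute)
  then have "set (map (stair u a) [0..<L]) \<subseteq> T"
    using in_T by auto
  then show ?thesis
    using stair_is_circuit[where u = u, OF \<open>4 \<le> L\<close> \<open>even L\<close> periodic inj] by blast
qed

definition leaf :: "(nat \<times> nat) set \<Rightarrow> nat \<Rightarrow> nat \<Rightarrow> bool" where
  "leaf S i j \<longleftrightarrow> (\<forall>j'. (i, j') \<in> S \<longrightarrow> j' = j) \<or> (\<forall>i'. (i', j) \<in> S \<longrightarrow> i' = i)"

text \<open>The walk from \<open>v\<close> that moves alternately inside its column to another row and inside
  its row to another column, with row and column indices interleaved in one sequence.\<close>
fun alt_walk :: "(nat \<times> nat) set \<Rightarrow> nat \<times> nat \<Rightarrow> nat \<Rightarrow> nat" where
  "alt_walk T v 0 = fst v"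
| "alt_walk T v (Suc 0) = snd v"
| "alt_walk T v (Suc (Suc k)) =
     (SOME z. z \<noteq> alt_walk T v k \<and>
        (if even k then (z, alt_walk T v (Suc k)) else (alt_walk T v (Suc k), z)) \<in> T)"

lemma alt_walk_stair:
  assumes no_leaf: "\<forall>(i, j)\<in>T. \<not> leaf T i j"
    and "v \<in> T"
  shows "stair (alt_walk T v) 0 k \<in> T \<and> alt_walk T v (k + 2) \<noteq> alt_walk T v k"
proof -
  let ?w = "alt_walk T v"
  have step: "stair ?w 0 (Suc k) \<in> T \<and> ?w (k + 2) \<noteq> ?w k" if "stair ?w 0 k \<in> T" for k
  proof -
    have "\<exists>z. z \<noteq> ?w k \<and> (if even k then (z, ?w (Suc k)) else (?w (Suc k), z)) \<in> T"
      using that no_leaf by (cases "even k") (auto simp: stair_def leaf_def)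
    from someI_ex[OF this] show ?thesis
      by (cases "even k") (simp_all add: stair_def)
  qed
  have "stair ?w 0 k \<in> T"
    by (induction k) (use \<open>v \<in> T\<close> step in \<open>auto simp: stair_def\<close>)
  then show ?thesis
    using step by blast
qed

lemma circuit_if_no_leaf:
  assumes "finite T" and "T \<noteq> {}"
    and no_leaf: "\<forall>(i, j)\<in>T. \<not> leaf T i j"
  shows "\<exists>vs. set vs \<subseteq> T \<and> is_circuit vs"
proof -
  obtain v where "v \<in> T"
    using \<open>T \<noteq> {}\<close> by blast
  define w where "w = alt_walk T v"
  have in_T: "stair w 0 k \<in> T" and skip: "w (k + 2) \<noteq> w k" for k
    using alt_walk_stair[OF no_leaf \<open>v \<in> T\<close>] by (simp_all add: w_def)
  define repeats where "repeats b \<longleftrightarrow> (\<exists>a<b. even a = even b \<and> w a = w b)" for b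
  have "w (2 * k) \<in> fst ` T" for k
    using in_T[of "2 * k"] by (force simp: stair_def)
  then have "\<not> inj (\<lambda>k. w (2 * k))"
    using inj_on_finite[of "\<lambda>k. w (2 * k)" UNIV "fst ` T"] \<open>finite T\<close> by auto
  then obtain k1 k2 where "k1 < k2" "w (2 * k1) = w (2 * k2)"
    unfolding inj_def by (metis linorder_neqE_nat)
  then have "repeats (2 * k2)"
    unfolding repeats_def by (intro exI[of _ "2 * k1"]) simp
  define b where "b = (LEAST b. repeats b)"
  obtain a where "a < b" "even a = even b" "w a = w b"
    using LeastI[of repeats, OF \<open>repeats (2 * k2)\<close>] unfolding b_def repeats_def by blast
  moreover have "w x \<noteq> w y" if "x < y" "y < b" "even x = even y" for x y
    using not_less_Least[of y repeats] that unfolding b_def repeats_def by blast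
  ultimately show ?thesis
    using circuit_from_first_repeat[of w T a b, OF in_T skip] by blast
qed

lemma card_remove_leaf:
  assumes "finite S" and "(i, j) \<in> S"
    and leaf: "leaf S i j"
  shows "card (fst ` (S - {(i, j)})) + card (snd ` (S - {(i, j)})) + 1
    \<le> card (fst ` S) + card (snd ` S)"
proof -
  let ?S' = "S - {(i, j)}"
  have "card (fst ` ?S') \<le> card (fst ` S)" "card (snd ` ?S') \<le> card (snd ` S)"
    using \<open>finite S\<close> by (auto intro: card_mono)
  moreover have "card (fst ` ?S') < card (fst ` S) \<or> card (snd ` ?S') < card (snd ` S)"
    using leaf unfolding leaf_def
  proof
    assume "\<forall>j'. (i, j') \<in> S \<longrightarrow> j' = j"
    then have "fst ` ?S' \<subseteq> fst ` S - {i}"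
      by force
    moreover have "i \<in> fst ` S"
      using \<open>(i, j) \<in> S\<close> by force
    ultimately show ?thesis
      using \<open>finite S\<close>
      by (meson card_Diff1_less card_mono finite_Diff finite_imageI order_le_less_trans disjI1)
  next
    assume "\<forall>i'. (i', j) \<in> S \<longrightarrow> i' = i"
    then have "snd ` ?S' \<subseteq> snd ` S - {j}"
      by force
    moreover have "j \<in> snd ` S"
      using \<open>(i, j) \<in> S\<close> by force
    ultimately show ?thesis
      using \<open>finite S\<close>
      by (meson card_Diff1_less card_mono finite_Diff finite_imageI order_le_less_trans disjI2)
  qed
  ultimately show ?thesis
    by linarith
qed

lemma card_le_card_fst_snd_if_no_circuit:
  assumes "finite S" and "S \<noteq> {}" and "\<nexists>vs. set vs \<subseteq> S \<and> is_circuit vs"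
  shows "card S + 1 \<le> card (fst ` S) + card (snd ` S)"
  using assms
proof (induction "card S" arbitrary: S rule: less_induct)
  case less
  obtain i j where "(i, j) \<in> S" and leaf: "leaf S i j"
    using circuit_if_no_leaf[OF less.prems(1,2)] less.prems(3) by fastforce
  define S' where "S' = S - {(i, j)}"
  have card_S: "card S = Suc (card S')"
    using card_Suc_Diff1[OF less.prems(1) \<open>(i, j) \<in> S\<close>] by (simp add: S'_def)
  show ?case
  proof (cases "S' = {}")
    case True
    then have "S = {(i, j)}"
      using \<open>(i, j) \<in> S\<close> by (auto simp: S'_def)
    then show ?thesis
      by simp
  next
    case False
    have "card S' + 1 \<le> card (fst ` S') + card (snd ` S')"
      using less.hyps[of S'] less.prems False card_S by (auto simp: S'_def)
    then show ?thesis
      using card_remove_leaf[OF less.prems(1) \<open>(i, j) \<in> S\<close> leaf] card_S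
      unfolding S'_def by linarith
  qed
qed

lemma rtrancl_exits_set:
  "(x, y) \<in> E\<^sup>* \<Longrightarrow> x \<in> X \<Longrightarrow> y \<notin> X \<Longrightarrow> \<exists>a b. a \<in> X \<and> b \<notin> X \<and> (a, b) \<in> E"
  by (induction rule: rtrancl_induct) auto

lemma card_fst_snd_le_if_connected:
  assumes "finite S" and "S \<noteq> {}" and "connected_pts S"
  shows "card (fst ` S) + card (snd ` S) \<le> card S + 1"
proof -
  let ?E = "{(x, y). x \<in> S \<and> y \<in> S \<and> adjacent x y}"
  obtain v where "v \<in> S"
    using \<open>S \<noteq> {}\<close> by blast
  have "\<exists>X\<subseteq>S. v \<in> X \<and> card X = Suc k \<and> card (fst ` X) + card (snd ` X) \<le> card X + 1"
    if "k < card S" for k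
    using that
  proof (induction k)
    case 0
    show ?case
      using \<open>v \<in> S\<close> by (intro exI[of _ "{v}"]) auto
  next
    case (Suc k)
    then obtain X where X: "X \<subseteq> S" "v \<in> X" "card X = Suc k"
      and bound: "card (fst ` X) + card (snd ` X) \<le> card X + 1"
      using Suc_lessD by blast
    have "finite X"
      using X(1) \<open>finite S\<close> finite_subset by blast
    have "X \<noteq> S"
      using X(3) Suc.prems by auto
    then obtain y where "y \<in> S" "y \<notin> X"
      using X(1) by blast
    then have "(v, y) \<in> ?E\<^sup>*"
      using \<open>connected_pts S\<close> \<open>v \<in> S\<close> unfolding connected_pts_def by blast
    then obtain x z where "x \<in> X" "z \<notin> X" "z \<in> S" "adjacent x z"
      using rtrancl_exits_set[of v y ?E X] X(2) \<open>y \<notin> X\<close> by blast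
    then have "fst z \<in> fst ` X \<or> snd z \<in> snd ` X"
      unfolding adjacent_def by (metis image_eqI)
    then have "card (fst ` insert z X) + card (snd ` insert z X)
        \<le> card (fst ` X) + card (snd ` X) + 1"
      using \<open>finite X\<close> by (auto simp: card_insert_if insert_absorb)
    then show ?case
      using X bound \<open>z \<in> S\<close> \<open>z \<notin> X\<close> \<open>finite X\<close> by (intro exI[of _ "insert z X"]) auto
  qed
  from this[of "card S - 1"] obtain X where "X \<subseteq> S" "card X = card S"
    and "card (fst ` X) + card (snd ` X) \<le> card X + 1"
    using \<open>finite S\<close> \<open>S \<noteq> {}\<close> by (auto simp: card_gt_0_iff)
  then show ?thesis
    using \<open>finite S\<close> card_subset_eq by blast
qed

lemma coupling_transp: "coupling m n p q P \<Longrightarrow> coupling n m q p (transp P)"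
  by (simp add: coupling_def transp_def)

lemma supp_transp: "supp n m (transp P) = prod.swap ` supp m n P"
  by (auto simp: supp_def transp_def)

lemma fst_supp_coupling:
  assumes "coupling m n p q P" and "\<forall>i<m. 0 < p i"
  shows "fst ` supp m n P = {..<m}"
proof
  show "fst ` supp m n P \<subseteq> {..<m}"
    by (auto simp: supp_def)
  show "{..<m} \<subseteq> fst ` supp m n P"
  proof
    fix i
    assume "i \<in> {..<m}"
    then have "(\<Sum>j<n. P i j) \<noteq> 0"
      using assms by (auto simp: coupling_def)
    then obtain j where "j < n" "P i j \<noteq> 0"
      by (meson lessThan_iff sum.neutral)
    then show "i \<in> fst ` supp m n P"
      using \<open>i \<in> {..<m}\<close> by (force simp: supp_def)
  qed
qed

lemma snd_supp_coupling:
  assumes "coupling m n p q P" and "\<forall>j<n. 0 < q j"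
  shows "snd ` supp m n P = {..<n}"
  using fst_supp_coupling[OF coupling_transp[OF assms(1)] assms(2)]
  by (simp add: supp_transp image_image)

theorem lemma2p2:
  fixes m n :: nat and p q :: "nat \<Rightarrow> real" and P :: "nat \<Rightarrow> nat \<Rightarrow> real"
  assumes "2 \<le> m" and "2 \<le> n"
    and "\<forall>i<m. 0 < p i" and "(\<Sum>i<m. p i) = 1"
    and "\<forall>j<n. 0 < q j" and "(\<Sum>j<n. q j) = 1"
    and "coupling m n p q P"
    and "local_optimal m n P"
    and "is_tree (supp m n P)"
  shows "card (supp m n P) = m + n - 1"
proof -
  let ?S = "supp m n P"
  have "finite ?S"
    by (rule finite_subset[of _ "{..<m} \<times> {..<n}"]) (auto simp: supp_def)
  have rows: "fst ` ?S = {..<m}"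
    using fst_supp_coupling[OF assms(7,3)] .
  have cols: "snd ` ?S = {..<n}"
    using snd_supp_coupling[OF assms(7,5)] .
  have "?S \<noteq> {}"
    using rows \<open>2 \<le> m\<close> by (metis image_empty lessThan_empty_iff not_numeral_le_zero)
  then show ?thesis
    using card_le_card_fst_snd_if_no_circuit[OF \<open>finite ?S\<close>]
      card_fst_snd_le_if_connected[OF \<open>finite ?S\<close>] \<open>is_tree ?S\<close>
    unfolding is_tree_def rows cols by fastforce
qed

end
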